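(* Let $a$ be a smooth, positive, increasing function on $(0,\infty)$ and consider the two-dimensional Robertson–Walker spacetime $ds^2=-dt^2+a^2(t)\,d\chi^2$, $t>0$, $\chi\in\mathbb{R}$, with comoving worldlines $\beta_0:\chi=0$, $\beta_1:\chi=\chi_1$, $\beta_2:\chi=\chi_2$, where $0<\chi_1<\chi_2$. Suppose the events $p=\beta_0(t_0)$, $q=\beta_1(t_1)$, $s=\beta_2(t_2)$ lie on a single past-directed null geodesic from $p$ (so they are lightlike simultaneous with respect to $\beta_0$ at $t_0$). Let $v_{\mathrm{spec}1}$ be the spectroscopic velocity of $\beta_1$ (at $q$) relative to $\beta_0$ at proper time $t_0$, $v_{\mathrm{spec}2}$ the spectroscopic velocity of $\beta_2$ (at $s$) relative to $\beta_1$ at proper time $t_1$, and $v_{\mathrm{spec}3}$ the spectroscopic velocity of $\beta_2$ (at $s$) relative to $\beta_0$ at proper time $t_0$. Then $$v_{\mathrm{spec}3}=\frac{v_{\mathrm{spec}1}+v_{\mathrm{spec}2}}{1+v_{\mathrm{spec}1}v_{\mathrm{spec}2}}.$$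
   Context: Comoving worldlines $\chi=\text{const}$ are parametrized by $t$, their proper time. For a comoving observer $\beta_j$ ($\chi=\chi_j$) at proper time $T$ and a comoving particle with coordinate $\chi$, let $(t,\chi)$ be the event of the particle on the past light cone of $(T,\chi_j)$, i.e. $\int_t^T du/a(u)=|\chi-\chi_j|$. The spectroscopic velocity of the particle relative to $\beta_j$ at proper time $T$ is defined by parallel transporting the particle's 4-velocity along the null geodesic from $(t,\chi)$ to $(T,\chi_j)$ and writing the result as $\gamma(u+V)$ with $u=\partial_t$, $V\perp u$; then $V=v_{\mathrm{spec}}\,a(T)^{-1}\partial_\chi$. It is known that $v_{\mathrm{spec}}=\mathrm{sgn}(\chi-\chi_j)\dfrac{a^2(T)-a^2(t)}{a^2(T)+a^2(t)}$. *)

theory Defs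
  imports "HOL-Analysis.Analysis"
begin

definition smooth_on :: "real set \<Rightarrow> (real \<Rightarrow> real) \<Rightarrow> bool" where
  "smooth_on S f \<longleftrightarrow> (\<forall>n. \<forall>x\<in>S. ((deriv ^^ n) f) differentiable (at x))"

text \<open>The event (t, chi) lies on the past light cone of (T, chij) in the 2D
  Robertson-Walker spacetime with scale factor a: the integral of du/a(u) from t to T
  equals |chi - chij|.\<close>
definition on_past_lightcone ::
  "(real \<Rightarrow> real) \<Rightarrow> real \<Rightarrow> real \<Rightarrow> real \<Rightarrow> real \<Rightarrow> bool" where
  "on_past_lightcone a T chij t chi \<longleftrightarrow>
     0 < t \<and> t \<le> T \<and> integral {t..T} (\<lambda>u. 1 / a u) = \<bar>chi - chij\<bar>"

text \<open>Spectroscopic velocity of the comoving particle chi relative to the comoving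
  observer chij at proper time T (formula from the context), where t is the time of the
  particle's event on the past light cone of (T, chij).\<close>
definition v_spec :: "(real \<Rightarrow> real) \<Rightarrow> real \<Rightarrow> real \<Rightarrow> real \<Rightarrow> real" where
  "v_spec a T chij chi =
     (let t = (THE t. on_past_lightcone a T chij t chi)
      in sgn (chi - chij) * ((a T)\<^sup>2 - (a t)\<^sup>2) / ((a T)\<^sup>2 + (a t)\<^sup>2))"

end

theory Submission
  imports Defs
begin

text \<open>Because the integrand 1/a of the light-cone integral is positive, the time of the
  event on a past light cone is unique, so the spectroscopic velocity is given by the explicit
  formula; and the past light cone of p through q is also the past light cone of q through s,
  because the integrals add up. With A = a(t0)^2, B = a(t1)^2, C = a(t2)^2 the three velocities
  are (A-B)/(A+B), (B-C)/(B+C) and (A-C)/(A+C), the hyperbolic tangents of half the logarithms of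
  the ratios A/B, B/C and A/C. These logarithms add, and the addition theorem for tanh is the
  velocity addition formula.\<close>

lemma smooth_on_imp_continuous_on:
  assumes "smooth_on S f"
  shows "continuous_on S f"
proof -
  have "f differentiable (at x)" if "x \<in> S" for x
    using assms that funpow_0 unfolding smooth_on_def by metis
  then show ?thesis
    by (simp add: continuous_at_imp_continuous_on differentiable_imp_continuous_within)
qed

lemma integral_pos_if_continuous_pos:
  fixes f :: "real \<Rightarrow> real"
  assumes "continuous_on {x..y} f" "\<And>u. u \<in> {x..y} \<Longrightarrow> f u > 0" "x < y"
  shows "integral {x..y} f > 0"
proof -
  obtain m where m: "m \<in> {x..y}" "\<And>u. u \<in> {x..y} \<Longrightarrow> f m \<le> f u"
    using continuous_attains_inf[OF compact_Icc _ assms(1)] \<open>x < y\<close> by auto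
  have "integral {x..y} (\<lambda>_. f m) \<le> integral {x..y} f"
    using m(2) integrable_continuous_real[OF assms(1)] by (intro integral_le) auto
  moreover have "integral {x..y} (\<lambda>_. f m) > 0"
    using assms(2)[OF m(1)] \<open>x < y\<close> by simp
  ultimately show ?thesis by linarith
qed

context
  fixes a :: "real \<Rightarrow> real"
  assumes cont: "continuous_on {0<..} a" and pos: "\<forall>t>0. a t > 0"
begin

lemma continuous_on_inverse_scale:
  assumes "0 < x"
  shows "continuous_on {x..y} (\<lambda>u. 1 / a u)"
proof -
  have sub: "{x..y} \<subseteq> {0<..}" using assms by auto
  then have "\<forall>u\<in>{x..y}. a u \<noteq> 0" using pos by (metis greaterThan_iff less_irrefl subsetD)
  then show ?thesis
    using continuous_on_subset[OF cont sub] by (intro continuous_intros) auto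
qed

lemma lightcone_integral_strict_antimono:
  assumes "0 < x" "x < y" "y \<le> T"
  shows "integral {y..T} (\<lambda>u. 1 / a u) < integral {x..T} (\<lambda>u. 1 / a u)"
proof -
  have "integral {x..y} (\<lambda>u. 1 / a u) > 0"
    using assms pos by (intro integral_pos_if_continuous_pos continuous_on_inverse_scale) auto
  moreover have "integral {x..y} (\<lambda>u. 1 / a u) + integral {y..T} (\<lambda>u. 1 / a u)
      = integral {x..T} (\<lambda>u. 1 / a u)"
    using assms integrable_continuous_real[OF continuous_on_inverse_scale[of x T]]
    by (intro Henstock_Kurzweil_Integration.integral_combine) auto
  ultimately show ?thesis by linarith
qed

lemma on_past_lightcone_unique:
  assumes "on_past_lightcone a T c t chi" "on_past_lightcone a T c t' chi"
  shows "t' = t"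
proof (rule ccontr)
  assume "t' \<noteq> t"
  then consider "t' < t" | "t < t'" by linarith
  then show False
    using assms lightcone_integral_strict_antimono[of t' t T]
      lightcone_integral_strict_antimono[of t t' T]
    unfolding on_past_lightcone_def by cases auto
qed

lemma v_spec_eq:
  assumes "on_past_lightcone a T c t chi"
  shows "v_spec a T c chi = sgn (chi - c) * ((a T)\<^sup>2 - (a t)\<^sup>2) / ((a T)\<^sup>2 + (a t)\<^sup>2)"
proof -
  have "(THE t. on_past_lightcone a T c t chi) = t"
    using assms on_past_lightcone_unique by blast
  then show ?thesis unfolding v_spec_def by simp
qed

lemma on_past_lightcone_relay:
  assumes "c \<le> chi1" "chi1 \<le> chi2"
    and q: "on_past_lightcone a T c t1 chi1" and s: "on_past_lightcone a T c t2 chi2"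
  shows "on_past_lightcone a t1 chi1 t2 chi2"
proof -
  have t2_le_t1: "t2 \<le> t1"
  proof (rule ccontr)
    assume "\<not> t2 \<le> t1"
    then show False
      using assms lightcone_integral_strict_antimono[of t1 t2 T]
      unfolding on_past_lightcone_def by auto
  qed
  have "integral {t2..t1} (\<lambda>u. 1 / a u) + integral {t1..T} (\<lambda>u. 1 / a u)
      = integral {t2..T} (\<lambda>u. 1 / a u)"
    using q s t2_le_t1 unfolding on_past_lightcone_def
    using integrable_continuous_real[OF continuous_on_inverse_scale[of t2 T]]
    by (intro Henstock_Kurzweil_Integration.integral_combine) auto
  then show ?thesis
    using assms t2_le_t1 unfolding on_past_lightcone_def by auto
qed

end

lemma velocity_addition_ratio:
  fixes A B C :: real
  assumes "A > 0" "B > 0" "C > 0"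
  shows "(A - C) / (A + C)
    = ((A - B) / (A + B) + (B - C) / (B + C)) / (1 + (A - B) / (A + B) * ((B - C) / (B + C)))"
proof -
  have "A + B > 0" "B + C > 0" "A + C > 0" "B * (A + C) > 0"
    using assms by simp_all
  then show ?thesis
    by (simp add: divide_simps) (simp add: algebra_simps)
qed

theorem theorem2:
  fixes a :: "real \<Rightarrow> real" and chi1 chi2 t0 t1 t2 :: real
  assumes smooth: "smooth_on {0<..} a"
    and pos: "\<forall>t>0. a t > 0"
    and incr: "mono_on {0<..} a"
    and chi: "0 < chi1" "chi1 < chi2"
    and t0: "0 < t0"
    and q: "on_past_lightcone a t0 0 t1 chi1"
    and s: "on_past_lightcone a t0 0 t2 chi2"
  shows "v_spec a t0 0 chi2 =
           (v_spec a t0 0 chi1 + v_spec a t1 chi1 chi2)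
           / (1 + v_spec a t0 0 chi1 * v_spec a t1 chi1 chi2)"
proof -
  note cont = smooth_on_imp_continuous_on[OF smooth]
  have r: "on_past_lightcone a t1 chi1 t2 chi2"
    using on_past_lightcone_relay[OF cont pos _ _ q s] chi by simp
  have "0 < t1" "0 < t2"
    using q s unfolding on_past_lightcone_def by auto
  then have "(a t0)\<^sup>2 > 0" "(a t1)\<^sup>2 > 0" "(a t2)\<^sup>2 > 0"
    using pos t0 by (simp_all add: less_imp_neq[symmetric])
  moreover have "sgn (chi1 - 0) = (1::real)" "sgn (chi2 - 0) = (1::real)"
    "sgn (chi2 - chi1) = (1::real)"
    using chi by simp_all
  ultimately show ?thesis
    unfolding v_spec_eq[OF cont pos q] v_spec_eq[OF cont pos s] v_spec_eq[OF cont pos r]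
    by (simp only: mult_1) (rule velocity_addition_ratio)
qed

end
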